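(* Let $(E,\mathcal{E},\mu)$ be a non-atomic $\sigma$-finite measure space with $\mu(E)=\infty$. Let $(a_n)_{n\ge1}$ be positive numbers with $a_n\to\infty$ and $a_n=o(n)$. For each $n$ let $P_n$ be a probability measure on $(E,\mathcal{E})$ such that $\mu_n:=(n/a_n)P_n$ satisfies $\mu_n(B)\le\mu_{n+1}(B)$ and $\mu_n(B)\to\mu(B)$ for every $B\in\mathcal{E}$. Then for any fixed $k\in\mathbb{N}_+$ and any $f\in L^2(\mu^k)$, $$\Big(\frac{n}{a_n}\Big)^{k/2}\int_{E^k} f\,dP_n^k\to0\qquad (n\to\infty).$$
   Context: $\mu^k$ and $P_n^k$ denote $k$-fold product measures on $E^k$. *)

theory Defs
  imports "HOL-Probability.Probability" "HOL-Library.Landau_Symbols"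
begin

definition non_atomic :: "'a measure \<Rightarrow> bool" where
  "non_atomic M \<longleftrightarrow> (\<forall>A\<in>sets M. 0 < emeasure M A \<longrightarrow>
      (\<exists>B\<in>sets M. B \<subseteq> A \<and> 0 < emeasure M B \<and> emeasure M B < emeasure M A))"

definition square_integrable :: "'a measure \<Rightarrow> ('a \<Rightarrow> real) \<Rightarrow> bool" where
  "square_integrable M f \<longleftrightarrow> f \<in> borel_measurable M \<and> integrable M (\<lambda>x. (f x)\<^sup>2)"

end

theory Submission
  imports Defs
begin

text \<open>Since \<open>(n/a_n) P_n\<close> increases to \<open>\<mu>\<close>, we have \<open>P_n \<le> (a_n/n) \<mu>\<close> and hence
  \<open>P_n^k \<le> c_n \<mu>^k\<close> with \<open>c_n = (a_n/n)^k \<longrightarrow> 0\<close>. Given \<open>\<epsilon> > 0\<close>, \<open>\<sigma>\<close>-finiteness yields a set \<open>D\<close>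
  of finite \<open>\<mu>^k\<close>-measure outside of which \<open>f\<^sup>2\<close> has \<open>\<mu>^k\<close>-integral below \<open>\<epsilon>\<^sup>2\<close>.
  Cauchy-Schwarz on \<open>D\<close> and on its complement gives \<open>|\<integral> f dP_n^k| \<le> c_n K + sqrt c_n \<epsilon>\<close>
  with \<open>K\<close> independent of \<open>n\<close>.\<close>

lemma le_limit_if_incseq_from:
  fixes u :: "nat \<Rightarrow> 'a::linorder_topology"
  assumes mono: "\<And>m. n \<le> m \<Longrightarrow> u m \<le> u (Suc m)" and lim: "u \<longlonglongrightarrow> L"
  shows "u n \<le> L"
proof (rule LIMSEQ_le_const[OF lim])
  have "u n \<le> u m" if "n \<le> m" for m
    using that by (induction rule: dec_induct) (auto intro: order_trans mono)
  then show "\<exists>N. \<forall>m\<ge>N. u n \<le> u m" by blast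
qed

lemma ennreal_le_sqrt_if_power2_le:
  fixes x :: ennreal
  assumes "x\<^sup>2 \<le> ennreal y"
  shows "x \<le> ennreal (sqrt y)"
proof (cases x rule: ennreal_cases)
  case (real a)
  then have "ennreal (a\<^sup>2) \<le> ennreal y"
    using assms by (simp add: ennreal_power)
  then have "a\<^sup>2 \<le> y \<or> a = 0"
    using \<open>0 \<le> a\<close> by (cases "y \<ge> 0") (auto simp: ennreal_neg)
  then show ?thesis
    using real by (cases "a = 0") (auto intro!: ennreal_leI real_le_rsqrt)
qed (use assms in \<open>simp add: top_unique\<close>)

lemma le_scale_measureI:
  assumes sets: "sets P = sets M"
    and le: "\<And>A. A \<in> sets M \<Longrightarrow> emeasure P A \<le> c * emeasure M A"
  shows "P \<le> scale_measure c M"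
proof -
  have "emeasure P A \<le> c * emeasure M A" for A
    using le[of A] emeasure_notin_sets[of A P] sets by (cases "A \<in> sets M") auto
  then show ?thesis
    unfolding le_measure_iff using sets sets_eq_imp_space_eq[OF sets]
    by (auto simp: space_scale_measure le_fun_def)
qed

lemma nn_integral_le_scale_measure:
  assumes "sets P = sets M" and "P \<le> scale_measure c M" and "g \<in> borel_measurable M"
  shows "(\<integral>\<^sup>+x. g x \<partial>P) \<le> c * (\<integral>\<^sup>+x. g x \<partial>M)"
proof -
  have "(\<integral>\<^sup>+x. g x \<partial>P) \<le> (\<integral>\<^sup>+x. g x \<partial>scale_measure c M)"
    using assms(1,2) by (intro nn_integral_mono_measure) auto
  also have "\<dots> = c * (\<integral>\<^sup>+x. g x \<partial>M)"
    using assms(3) by (rule nn_integral_scale_measure)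
  finally show ?thesis .
qed

lemma le_scale_measure_if_scaled_incseq_limit:
  fixes P :: "nat \<Rightarrow> 'a measure" and w :: "nat \<Rightarrow> real"
  assumes sets: "sets (P n) = sets M" and w: "w n > 0"
    and mono: "\<And>m B. n \<le> m \<Longrightarrow> B \<in> sets M \<Longrightarrow>
      ennreal (w m) * emeasure (P m) B \<le> ennreal (w (Suc m)) * emeasure (P (Suc m)) B"
    and lim: "\<And>B. B \<in> sets M \<Longrightarrow> (\<lambda>m. ennreal (w m) * emeasure (P m) B) \<longlonglongrightarrow> emeasure M B"
  shows "P n \<le> scale_measure (ennreal (1 / w n)) M"
proof (rule le_scale_measureI[OF sets])
  fix B assume B: "B \<in> sets M"
  have "ennreal (w n) * emeasure (P n) B \<le> emeasure M B"
    using mono[OF _ B] lim[OF B] by (rule le_limit_if_incseq_from)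
  then have "ennreal (1 / w n) * (ennreal (w n) * emeasure (P n) B)
      \<le> ennreal (1 / w n) * emeasure M B"
    by (rule mult_left_mono) simp
  then show "emeasure (P n) B \<le> ennreal (1 / w n) * emeasure M B"
    using w by (simp add: mult.assoc[symmetric] ennreal_mult[symmetric])
qed

lemma nn_integral_PiM_le_power_if_le_scale_measure:
  fixes P M :: "'a measure" and I :: "'i set"
  assumes sfM: "sigma_finite_measure M" and sfP: "sigma_finite_measure P"
    and sets: "sets P = sets M" and le: "P \<le> scale_measure c M"
    and I: "finite I" and h: "h \<in> borel_measurable (PiM I (\<lambda>_. M))"
  shows "(\<integral>\<^sup>+x. h x \<partial>PiM I (\<lambda>_. P)) \<le> c ^ card I * (\<integral>\<^sup>+x. h x \<partial>PiM I (\<lambda>_. M))"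
  using I h
proof (induction I arbitrary: h rule: finite_induct)
  case empty
  then show ?case by (simp add: PiM_empty)
next
  case (insert i I)
  interpret PM: product_sigma_finite "\<lambda>_. M" by (simp add: product_sigma_finite_def sfM)
  interpret PP: product_sigma_finite "\<lambda>_. P" by (simp add: product_sigma_finite_def sfP)
  have sets_PiM: "sets (PiM J (\<lambda>_. P)) = sets (PiM J (\<lambda>_. M))" for J :: "'i set"
    by (rule sets_PiM_cong) (auto simp: sets)
  note measurable_PiM = measurable_cong_sets[OF sets_PiM refl]
  note [measurable] = insert.prems
  define G where "G x = (\<integral>\<^sup>+y. h (x(i:=y)) \<partial>M)" for x
  have [measurable]: "G \<in> borel_measurable (PiM I (\<lambda>_. M))"
    unfolding G_def by measurable
  have "(\<integral>\<^sup>+x. h x \<partial>PiM (insert i I) (\<lambda>_. P)) = (\<integral>\<^sup>+x. (\<integral>\<^sup>+y. h (x(i:=y)) \<partial>P) \<partial>PiM I (\<lambda>_. P))"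
    using insert.prems by (intro PP.product_nn_integral_insert insert.hyps) (simp add: measurable_PiM)
  also have "\<dots> \<le> (\<integral>\<^sup>+x. c * G x \<partial>PiM I (\<lambda>_. P))"
  proof (rule nn_integral_mono)
    fix x assume "x \<in> space (PiM I (\<lambda>_. P))"
    then have "x \<in> space (PiM I (\<lambda>_. M))" using sets_eq_imp_space_eq[OF sets_PiM] by simp
    then have "(\<lambda>y. h (x(i:=y))) \<in> borel_measurable M"
      using measurable_component_update[OF _ \<open>i \<notin> I\<close>] by measurable
    then show "(\<integral>\<^sup>+y. h (x(i:=y)) \<partial>P) \<le> c * G x"
      unfolding G_def using nn_integral_le_scale_measure[OF sets le] by blast
  qed
  also have "\<dots> = c * (\<integral>\<^sup>+x. G x \<partial>PiM I (\<lambda>_. P))"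
    by (intro nn_integral_cmult) (simp add: measurable_PiM)
  also have "\<dots> \<le> c * (c ^ card I * (\<integral>\<^sup>+x. G x \<partial>PiM I (\<lambda>_. M)))"
    by (intro mult_left_mono insert.IH) auto
  also have "(\<integral>\<^sup>+x. G x \<partial>PiM I (\<lambda>_. M)) = (\<integral>\<^sup>+x. h x \<partial>PiM (insert i I) (\<lambda>_. M))"
    unfolding G_def using insert.hyps insert.prems by (rule PM.product_nn_integral_insert[symmetric])
  finally show ?case
    using insert.hyps by (simp add: mult.assoc)
qed

lemma PiM_le_scale_measure_power:
  fixes P M :: "'a measure" and I :: "'i set"
  assumes sfM: "sigma_finite_measure M" and sfP: "sigma_finite_measure P"
    and sets: "sets P = sets M" and le: "P \<le> scale_measure c M" and I: "finite I"
  shows "PiM I (\<lambda>_. P) \<le> scale_measure (c ^ card I) (PiM I (\<lambda>_. M))"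
proof (rule le_scale_measureI)
  show sets_PiM: "sets (PiM I (\<lambda>_. P)) = sets (PiM I (\<lambda>_. M))"
    by (rule sets_PiM_cong) (auto simp: sets)
  fix A assume A: "A \<in> sets (PiM I (\<lambda>_. M))"
  show "emeasure (PiM I (\<lambda>_. P)) A \<le> c ^ card I * emeasure (PiM I (\<lambda>_. M)) A"
    using nn_integral_PiM_le_power_if_le_scale_measure[OF sfM sfP sets le I, of "indicator A"] A sets_PiM
    by simp
qed

lemma abs_integral_le_if_nn_integral_le:
  fixes f :: "'a \<Rightarrow> real"
  assumes le: "(\<integral>\<^sup>+x. ennreal \<bar>f x\<bar> \<partial>M) \<le> ennreal B" and B: "B \<ge> 0"
  shows "\<bar>\<integral>x. f x \<partial>M\<bar> \<le> B"
proof (cases "integrable M f")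
  case True
  have "ennreal \<bar>\<integral>x. f x \<partial>M\<bar> \<le> ennreal B"
    using integral_norm_bound_ennreal[OF True] le by simp
  then show ?thesis
    using B by simp
qed (use B in \<open>simp add: not_integrable_integral_eq\<close>)

lemma nn_integral_indicator_power2_le_if_le_scale_measure:
  assumes sets: "sets Q = sets F" and le: "Q \<le> scale_measure c F"
    and h: "h \<in> borel_measurable F" and A: "A \<in> sets F"
  shows "(\<integral>\<^sup>+x. h x * indicator A x \<partial>Q)\<^sup>2 \<le> c\<^sup>2 * (\<integral>\<^sup>+x. (h x)\<^sup>2 \<partial>F) * emeasure F A"
proof -
  note measurable_Q = measurable_cong_sets[OF sets refl]
  have indicator2: "(indicator A x :: ennreal)\<^sup>2 = indicator A x" for x
    by (simp split: split_indicator)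
  have "(\<integral>\<^sup>+x. h x * indicator A x \<partial>Q)\<^sup>2
      \<le> (\<integral>\<^sup>+x. (h x)\<^sup>2 \<partial>Q) * (\<integral>\<^sup>+x. (indicator A x)\<^sup>2 \<partial>Q)"
    using h A by (intro Cauchy_Schwarz_nn_integral) (simp_all add: measurable_Q)
  also have "\<dots> \<le> (c * (\<integral>\<^sup>+x. (h x)\<^sup>2 \<partial>F)) * (c * (\<integral>\<^sup>+x. (indicator A x)\<^sup>2 \<partial>F))"
    using h A by (intro mult_mono nn_integral_le_scale_measure[OF sets le]) auto
  also have "\<dots> = c\<^sup>2 * (\<integral>\<^sup>+x. (h x)\<^sup>2 \<partial>F) * emeasure F A"
    using A by (simp add: indicator2 power2_eq_square[of c] mult_ac)
  finally show ?thesis .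
qed

lemma (in prob_space) nn_integral_power2_le_if_le_scale_measure:
  assumes sets: "sets M = sets F" and le: "M \<le> scale_measure c F" and h: "h \<in> borel_measurable F"
  shows "(\<integral>\<^sup>+x. h x \<partial>M)\<^sup>2 \<le> c * (\<integral>\<^sup>+x. (h x)\<^sup>2 \<partial>F)"
proof -
  have "h \<in> borel_measurable M"
    using h by (simp add: measurable_cong_sets[OF sets refl])
  then have "(\<integral>\<^sup>+x. h x \<partial>M)\<^sup>2 \<le> (\<integral>\<^sup>+x. (h x)\<^sup>2 \<partial>M) * (\<integral>\<^sup>+x. 1\<^sup>2 \<partial>M)"
    using Cauchy_Schwarz_nn_integral[of h M "\<lambda>_. 1"] by simp
  also have "\<dots> \<le> c * (\<integral>\<^sup>+x. (h x)\<^sup>2 \<partial>F)"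
    using nn_integral_le_scale_measure[OF sets le, of "\<lambda>x. (h x)\<^sup>2"] h by (simp add: emeasure_space_1)
  finally show ?thesis .
qed

lemma abs_integral_le_if_le_scale_measure:
  fixes F Q :: "'a measure" and c :: real and f :: "'a \<Rightarrow> real"
  assumes Q: "prob_space Q" and sets: "sets Q = sets F" and c: "c \<ge> 0"
    and le: "Q \<le> scale_measure (ennreal c) F"
    and f[measurable]: "f \<in> borel_measurable F" and f2: "integrable F (\<lambda>x. (f x)\<^sup>2)"
    and D[measurable]: "D \<in> sets F" and D_fin: "emeasure F D < \<infinity>"
  shows "\<bar>\<integral>x. f x \<partial>Q\<bar> \<le> c * sqrt ((\<integral>x. (f x)\<^sup>2 \<partial>F) * measure F D)
           + sqrt c * sqrt (\<integral>x. (f x)\<^sup>2 * indicator (space F - D) x \<partial>F)"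
proof -
  define C where "C = space F - D"
  define S where "S = (\<integral>x. (f x)\<^sup>2 \<partial>F)"
  define T where "T = (\<integral>x. (f x)\<^sup>2 * indicator C x \<partial>F)"
  define g where "g x = ennreal \<bar>f x\<bar>" for x
  have [measurable]: "C \<in> sets F" "g \<in> borel_measurable F"
    unfolding C_def g_def by auto
  have S_T_nonneg: "S \<ge> 0" "T \<ge> 0"
    unfolding S_def T_def by (auto intro: integral_nonneg_AE)
  note measurable_Q = measurable_cong_sets[OF sets refl]
  have g2: "(g x)\<^sup>2 = ennreal ((f x)\<^sup>2)" for x
    by (simp add: g_def ennreal_power)
  have "(\<integral>\<^sup>+x. g x * indicator D x \<partial>Q)\<^sup>2 \<le> (ennreal c)\<^sup>2 * (\<integral>\<^sup>+x. (g x)\<^sup>2 \<partial>F) * emeasure F D"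
    by (rule nn_integral_indicator_power2_le_if_le_scale_measure[OF sets le]) simp_all
  also have "\<dots> = ennreal ((c * sqrt (S * measure F D))\<^sup>2)"
    using c S_T_nonneg D_fin
    by (simp add: S_def g2 nn_integral_eq_integral[OF f2] emeasure_eq_ennreal_measure
        power_mult_distrib ennreal_power ennreal_mult[symmetric])
  finally have on_D: "(\<integral>\<^sup>+x. g x * indicator D x \<partial>Q) \<le> ennreal (c * sqrt (S * measure F D))"
    by (rule ennreal_le_sqrt_if_power2_le[THEN order_trans]) (simp add: c S_T_nonneg)
  have "(\<integral>\<^sup>+x. g x * indicator C x \<partial>Q)\<^sup>2 \<le> ennreal c * (\<integral>\<^sup>+x. (g x * indicator C x)\<^sup>2 \<partial>F)"
    by (rule prob_space.nn_integral_power2_le_if_le_scale_measure[OF Q sets le]) simp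
  also have "(\<integral>\<^sup>+x. (g x * indicator C x)\<^sup>2 \<partial>F) = (\<integral>\<^sup>+x. ennreal ((f x)\<^sup>2 * indicator C x) \<partial>F)"
    by (intro nn_integral_cong) (simp add: g2 split: split_indicator)
  also have "\<dots> = ennreal T"
    unfolding T_def by (rule nn_integral_eq_integral) (auto intro: integrable_real_mult_indicator f2)
  finally have on_C: "(\<integral>\<^sup>+x. g x * indicator C x \<partial>Q) \<le> ennreal (sqrt (c * T))"
    using c S_T_nonneg by (intro ennreal_le_sqrt_if_power2_le) (simp add: ennreal_mult)
  have "(\<integral>\<^sup>+x. g x \<partial>Q) = (\<integral>\<^sup>+x. g x * indicator D x + g x * indicator C x \<partial>Q)"
    using sets_eq_imp_space_eq[OF sets]
    by (intro nn_integral_cong) (auto simp: C_def split: split_indicator)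
  also have "\<dots> = (\<integral>\<^sup>+x. g x * indicator D x \<partial>Q) + (\<integral>\<^sup>+x. g x * indicator C x \<partial>Q)"
    by (rule nn_integral_add) (simp_all add: measurable_Q)
  also have "\<dots> \<le> ennreal (c * sqrt (S * measure F D) + sqrt (c * T))"
    using add_mono[OF on_D on_C] c S_T_nonneg by simp
  finally have "\<bar>\<integral>x. f x \<partial>Q\<bar> \<le> c * sqrt (S * measure F D) + sqrt (c * T)"
    using c S_T_nonneg unfolding g_def by (intro abs_integral_le_if_nn_integral_le) auto
  then show ?thesis
    unfolding S_def T_def C_def real_sqrt_mult .
qed

lemma (in sigma_finite_measure) integral_outside_finite_measure_small:
  fixes g :: "'a \<Rightarrow> real"
  assumes g: "integrable M g" and \<epsilon>: "\<epsilon> > 0"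
  obtains D where "D \<in> sets M" "emeasure M D < \<infinity>"
    "(\<integral>x. \<bar>g x\<bar> * indicator (space M - D) x \<partial>M) < \<epsilon>"
proof -
  obtain A where A: "range A \<subseteq> sets M" "(\<Union>i. A i) = space M" "\<And>i. emeasure M (A i) \<noteq> \<infinity>" "incseq A"
    using sigma_finite_incseq by blast
  have "(\<lambda>i. \<integral>x. \<bar>g x\<bar> * indicator (space M - A i) x \<partial>M) \<longlonglongrightarrow> (\<integral>x. 0 \<partial>M)"
  proof (rule integral_dominated_convergence[where w="\<lambda>x. \<bar>g x\<bar>"])
    show "AE x in M. (\<lambda>i. \<bar>g x\<bar> * indicator (space M - A i) x) \<longlonglongrightarrow> 0"
    proof (rule AE_I2)
      fix x assume "x \<in> space M"
      then obtain i where "x \<in> A i" using A(2) by auto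
      then have "eventually (\<lambda>j. x \<in> A j) sequentially"
        using A(4) unfolding eventually_sequentially incseq_def by blast
      then show "(\<lambda>i. \<bar>g x\<bar> * indicator (space M - A i) x) \<longlonglongrightarrow> 0"
        by (rule tendsto_eventually[OF eventually_mono]) simp
    qed
  qed (use g A(1) in \<open>auto split: split_indicator\<close>)
  then have "eventually (\<lambda>i. (\<integral>x. \<bar>g x\<bar> * indicator (space M - A i) x \<partial>M) < \<epsilon>) sequentially"
    using \<epsilon> by (simp add: order_tendsto_iff)
  then obtain i where "(\<integral>x. \<bar>g x\<bar> * indicator (space M - A i) x \<partial>M) < \<epsilon>"
    unfolding eventually_sequentially by blast
  with A(1,3) show ?thesis
    by (intro that[of "A i"]) (auto simp: less_top)
qed

lemma tendsto_zero_integral_div_sqrt_if_le_scale_measure: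
  fixes F :: "'a measure" and Q :: "'i \<Rightarrow> 'a measure" and c :: "'i \<Rightarrow> real"
    and f :: "'a \<Rightarrow> real"
  assumes F: "sigma_finite_measure F"
    and f[measurable]: "f \<in> borel_measurable F" and f2: "integrable F (\<lambda>x. (f x)\<^sup>2)"
    and c: "(c \<longlongrightarrow> 0) L"
    and Q: "eventually (\<lambda>i. prob_space (Q i) \<and> sets (Q i) = sets F \<and> c i > 0
                          \<and> Q i \<le> scale_measure (ennreal (c i)) F) L"
  shows "((\<lambda>i. (\<integral>x. f x \<partial>Q i) / sqrt (c i)) \<longlongrightarrow> 0) L"
  unfolding tendsto_iff dist_real_def diff_0_right
proof (intro allI impI)
  fix e :: real assume "e > 0"
  then obtain D where D: "D \<in> sets F" "emeasure F D < \<infinity>"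
    and tail: "(\<integral>x. \<bar>(f x)\<^sup>2\<bar> * indicator (space F - D) x \<partial>F) < (e/2)\<^sup>2"
    using sigma_finite_measure.integral_outside_finite_measure_small[OF F f2, of "(e/2)\<^sup>2"] by auto
  define K where "K = sqrt ((\<integral>x. (f x)\<^sup>2 \<partial>F) * measure F D)"
  have "((\<lambda>i. sqrt (c i) * K) \<longlongrightarrow> 0) L"
    using tendsto_mult_right[OF tendsto_real_sqrt[OF c], of K] by simp
  then have "eventually (\<lambda>i. sqrt (c i) * K < e/2) L"
    using \<open>e > 0\<close> by (intro order_tendstoD(2)) auto
  with Q show "eventually (\<lambda>i. \<bar>(\<integral>x. f x \<partial>Q i) / sqrt (c i)\<bar> < e) L"
  proof eventually_elim
    case (elim i)
    define s where "s = sqrt (c i)"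
    have s: "s > 0" "c i = s * s" "s * K < e/2"
      using elim by (auto simp: s_def)
    have "\<bar>\<integral>x. f x \<partial>Q i\<bar> \<le> c i * K + s * sqrt (\<integral>x. (f x)\<^sup>2 * indicator (space F - D) x \<partial>F)"
      unfolding K_def s_def
      by (rule abs_integral_le_if_le_scale_measure[OF _ _ _ _ f f2 D]) (use elim in auto)
    also have "\<dots> < s * (s * K) + s * (e/2)"
      using tail s(1,2) \<open>e > 0\<close> by (intro add_le_less_mono mult_strict_left_mono real_less_lsqrt) auto
    also have "\<dots> = s * (s * K + e/2)"
      by (simp add: distrib_left)
    also have "\<dots> < s * e"
      using s(1,3) by (intro mult_strict_left_mono) auto
    finally show ?case
      using s(1) by (simp add: pos_divide_less_eq s_def mult.commute)
  qed
qed

lemma tendsto_zero_integral_PiM_if_le_scale_measure: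
  fixes M :: "'a measure" and P :: "'i \<Rightarrow> 'a measure" and r :: "'i \<Rightarrow> real"
    and I :: "'j set" and f :: "('j \<Rightarrow> 'a) \<Rightarrow> real"
  assumes M: "sigma_finite_measure M" and I: "finite I" "I \<noteq> {}"
    and f: "square_integrable (PiM I (\<lambda>_. M)) f"
    and r: "(r \<longlongrightarrow> 0) L"
    and P: "eventually (\<lambda>i. prob_space (P i) \<and> sets (P i) = sets M \<and> r i > 0
                          \<and> P i \<le> scale_measure (ennreal (r i)) M) L"
  shows "((\<lambda>i. (1 / r i) powr (real (card I) / 2) * (\<integral>x. f x \<partial>PiM I (\<lambda>_. P i))) \<longlongrightarrow> 0) L"
proof -
  interpret PM: product_sigma_finite "\<lambda>_. M"
    using M by (simp add: product_sigma_finite_def)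
  have "eventually (\<lambda>i. prob_space (PiM I (\<lambda>_. P i)) \<and> sets (PiM I (\<lambda>_. P i)) = sets (PiM I (\<lambda>_. M))
      \<and> r i ^ card I > 0 \<and> PiM I (\<lambda>_. P i) \<le> scale_measure (ennreal (r i ^ card I)) (PiM I (\<lambda>_. M))) L"
    using P
  proof eventually_elim
    case (elim i)
    then have "PiM I (\<lambda>_. P i) \<le> scale_measure (ennreal (r i) ^ card I) (PiM I (\<lambda>_. M))"
      by (intro PiM_le_scale_measure_power M prob_space_imp_sigma_finite I) auto
    with elim show ?case
      by (auto simp: ennreal_power intro!: prob_space_PiM sets_PiM_cong)
  qed
  moreover have "((\<lambda>i. r i ^ card I) \<longlongrightarrow> 0) L"
    using tendsto_power[OF r, of "card I"] I by (simp add: power_0_left)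
  ultimately have "((\<lambda>i. (\<integral>x. f x \<partial>PiM I (\<lambda>_. P i)) / sqrt (r i ^ card I)) \<longlongrightarrow> 0) L"
    using f PM.sigma_finite[OF I(1)] unfolding square_integrable_def
    by (intro tendsto_zero_integral_div_sqrt_if_le_scale_measure) auto
  moreover have "eventually (\<lambda>i. (\<integral>x. f x \<partial>PiM I (\<lambda>_. P i)) / sqrt (r i ^ card I)
      = (1 / r i) powr (real (card I) / 2) * (\<integral>x. f x \<partial>PiM I (\<lambda>_. P i))) L"
    using P
  proof eventually_elim
    case (elim i)
    then have "sqrt (r i ^ card I) = 1 / (1 / r i) powr (real (card I) / 2)"
      by (simp add: powr_half_sqrt[symmetric] powr_realpow[symmetric] powr_powr powr_divide)
    then show ?case by simp
  qed
  ultimately show ?thesis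
    by (rule Lim_transform_eventually)
qed

theorem lemma3:
  fixes M :: "'a measure" and P :: "nat \<Rightarrow> 'a measure" and a :: "nat \<Rightarrow> real"
    and k :: nat and f :: "(nat \<Rightarrow> 'a) \<Rightarrow> real"
  assumes "sigma_finite_measure M"
    and "non_atomic M"
    and "emeasure M (space M) = \<infinity>"
    and "\<And>n. n \<ge> 1 \<Longrightarrow> a n > 0"
    and "filterlim a at_top sequentially"
    and "a \<in> o(\<lambda>n. real n)"
    and "\<And>n. n \<ge> 1 \<Longrightarrow> prob_space (P n)"
    and "\<And>n. n \<ge> 1 \<Longrightarrow> sets (P n) = sets M"
    and "\<And>n B. n \<ge> 1 \<Longrightarrow> B \<in> sets M \<Longrightarrow>
           ennreal (real n / a n) * emeasure (P n) B
             \<le> ennreal (real (Suc n) / a (Suc n)) * emeasure (P (Suc n)) B"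
    and "\<And>B. B \<in> sets M \<Longrightarrow>
           ((\<lambda>n. ennreal (real n / a n) * emeasure (P n) B) \<longlongrightarrow> emeasure M B) sequentially"
    and "k \<ge> 1"
    and "square_integrable (PiM {..<k} (\<lambda>_. M)) f"
  shows "((\<lambda>n. (real n / a n) powr (real k / 2) * (\<integral>x. f x \<partial>(PiM {..<k} (\<lambda>_. P n))))
           \<longlongrightarrow> 0) sequentially"
proof -
  have P_le: "P n \<le> scale_measure (ennreal (a n / real n)) M" if n: "n \<ge> 1" for n
    using le_scale_measure_if_scaled_incseq_limit[of P n M "\<lambda>n. real n / a n"]
      assms(4,8,10) assms(9)[OF order_trans[OF n]] n
    by simp
  have "(\<lambda>n. a n / real n) \<longlonglongrightarrow> 0"
    using smalloD_tendsto[OF assms(6)] by simp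
  moreover have "eventually (\<lambda>n. prob_space (P n) \<and> sets (P n) = sets M \<and> a n / real n > 0
      \<and> P n \<le> scale_measure (ennreal (a n / real n)) M) sequentially"
    using eventually_ge_at_top[of 1]
    by eventually_elim (use assms(4,7,8) P_le in auto)
  ultimately have "(\<lambda>n. (1 / (a n / real n)) powr (real (card {..<k}) / 2)
      * (\<integral>x. f x \<partial>PiM {..<k} (\<lambda>_. P n))) \<longlonglongrightarrow> 0"
    using assms(1,11,12) by (intro tendsto_zero_integral_PiM_if_le_scale_measure) (auto simp: lessThan_empty_iff)
  then show ?thesis
    by simp
qed

end
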